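(* Let $u(x,y)$, $v(x,y)$ be two conjugate harmonic functions on an open set $\Omega\subset\mathbb{R}^2$, i.e. $u_x=v_y$ and $u_y=-v_x$ on $\Omega$. Let $\psi(x,y)$ be a (sufficiently smooth) real function on $\Omega$ satisfying $$(v\,\psi_x)_x+(v\,\psi_y)_y=0 .$$ Define $$f_2=-\psi_y,\quad g_2=\psi_x,\quad f_1=-\psi_y u-\psi_x v,\quad g_1=\psi_x u-\psi_y v,\quad \Lambda=\psi_x^2+\psi_y^2 .$$ Then the geodesic flow of the metric $ds^2=\Lambda(x,y)(dx^2+dy^2)$ admits the rational first integral $$F=\frac{f_1(x,y)p_1+g_1(x,y)p_2}{f_2(x,y)p_1+g_2(x,y)p_2}.$$
   Context: For a metric $ds^2=\Lambda(x,y)(dx^2+dy^2)$ in coordinates $(x,y)$ with momenta $(p_1,p_2)$, the geodesic flow is the Hamiltonian system with Hamiltonian $H=\frac{p_1^2+p_2^2}{2\Lambda}$ and canonical Poisson bracket $\{F,H\}=\sum_{i=1}^2\left(\frac{\partial F}{\partial x^i}\frac{\partial H}{\partial p_i}-\frac{\partial F}{\partial p_i}\frac{\partial H}{\partial x^i}\right)$ with $x^1=x$, $x^2=y$. A function $F(x,y,p_1,p_2)$ is a first integral if $\{F,H\}\equiv 0$ (wherever $F$ and $H$ are defined). *)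

theory Defs
  imports "HOL-Analysis.Analysis"
begin

definition pdx :: "(real \<Rightarrow> real \<Rightarrow> real) \<Rightarrow> real \<Rightarrow> real \<Rightarrow> real" where
  "pdx f x y = deriv (\<lambda>t. f t y) x"
definition pdy :: "(real \<Rightarrow> real \<Rightarrow> real) \<Rightarrow> real \<Rightarrow> real \<Rightarrow> real" where
  "pdy f x y = deriv (\<lambda>t. f x t) y"

definition has_partials2 :: "(real \<Rightarrow> real \<Rightarrow> real) \<Rightarrow> real \<Rightarrow> real \<Rightarrow> bool" where
  "has_partials2 f x y \<longleftrightarrow> (\<lambda>t. f t y) differentiable (at x) \<and> (\<lambda>t. f x t) differentiable (at y)"

definition C2_on :: "(real \<times> real) set \<Rightarrow> (real \<Rightarrow> real \<Rightarrow> real) \<Rightarrow> bool" where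
  "C2_on \<Omega> f \<longleftrightarrow>
     (\<forall>(x,y)\<in>\<Omega>. has_partials2 f x y \<and> has_partials2 (pdx f) x y \<and> has_partials2 (pdy f) x y) \<and>
     continuous_on \<Omega> (\<lambda>(x,y). f x y) \<and>
     continuous_on \<Omega> (\<lambda>(x,y). pdx f x y) \<and> continuous_on \<Omega> (\<lambda>(x,y). pdy f x y) \<and>
     continuous_on \<Omega> (\<lambda>(x,y). pdx (pdx f) x y) \<and> continuous_on \<Omega> (\<lambda>(x,y). pdy (pdx f) x y) \<and>
     continuous_on \<Omega> (\<lambda>(x,y). pdx (pdy f) x y) \<and> continuous_on \<Omega> (\<lambda>(x,y). pdy (pdy f) x y)"

definition C1_on :: "(real \<times> real) set \<Rightarrow> (real \<Rightarrow> real \<Rightarrow> real) \<Rightarrow> bool" where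
  "C1_on \<Omega> f \<longleftrightarrow>
     (\<forall>(x,y)\<in>\<Omega>. has_partials2 f x y) \<and>
     continuous_on \<Omega> (\<lambda>(x,y). f x y) \<and>
     continuous_on \<Omega> (\<lambda>(x,y). pdx f x y) \<and> continuous_on \<Omega> (\<lambda>(x,y). pdy f x y)"

type_synonym phase_fun = "real \<Rightarrow> real \<Rightarrow> real \<Rightarrow> real \<Rightarrow> real"

definition d_x :: "phase_fun \<Rightarrow> phase_fun" where "d_x F x y p1 p2 = deriv (\<lambda>t. F t y p1 p2) x"
definition d_y :: "phase_fun \<Rightarrow> phase_fun" where "d_y F x y p1 p2 = deriv (\<lambda>t. F x t p1 p2) y"
definition d_p1 :: "phase_fun \<Rightarrow> phase_fun" where "d_p1 F x y p1 p2 = deriv (\<lambda>t. F x y t p2) p1"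
definition d_p2 :: "phase_fun \<Rightarrow> phase_fun" where "d_p2 F x y p1 p2 = deriv (\<lambda>t. F x y p1 t) p2"

definition has_partials4 :: "phase_fun \<Rightarrow> real \<Rightarrow> real \<Rightarrow> real \<Rightarrow> real \<Rightarrow> bool" where
  "has_partials4 F x y p1 p2 \<longleftrightarrow>
     (\<lambda>t. F t y p1 p2) differentiable (at x) \<and> (\<lambda>t. F x t p1 p2) differentiable (at y) \<and>
     (\<lambda>t. F x y t p2) differentiable (at p1) \<and> (\<lambda>t. F x y p1 t) differentiable (at p2)"

definition poisson :: "phase_fun \<Rightarrow> phase_fun \<Rightarrow> phase_fun" where
  "poisson F H x y p1 p2 =
     d_x F x y p1 p2 * d_p1 H x y p1 p2 + d_y F x y p1 p2 * d_p2 H x y p1 p2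
   - d_p1 F x y p1 p2 * d_x H x y p1 p2 - d_p2 F x y p1 p2 * d_y H x y p1 p2"

text \<open>Hamiltonian of the geodesic flow of ds^2 = Lambda (dx^2 + dy^2).\<close>
definition geod_H :: "(real \<Rightarrow> real \<Rightarrow> real) \<Rightarrow> phase_fun" where
  "geod_H Lam x y p1 p2 = (p1^2 + p2^2) / (2 * Lam x y)"

end

theory Submission
  imports Defs
begin

text \<open>
  Write \<open>a = \<psi>\<^sub>x\<close>, \<open>b = \<psi>\<^sub>y\<close> and \<open>D = -b p\<^sub>1 + a p\<^sub>2\<close>. For any ratio \<open>F = N/D\<close> of two forms linear
  in the momenta, \<open>{F, H}\<close> is a rational function whose numerator is cubic in \<open>p\<close>. With the
  given coefficients, the Cauchy-Riemann equations and \<open>a\<^sub>y = b\<^sub>x\<close> make this numerator factor as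
  \<open>-2 \<Lambda> (p\<^sub>1\<^sup>2 + p\<^sub>2\<^sup>2) D (a v\<^sub>x + b v\<^sub>y + v (a\<^sub>x + b\<^sub>y))\<close>, and the last factor is the product-rule
  expansion of \<open>(v \<psi>\<^sub>x)\<^sub>x + (v \<psi>\<^sub>y)\<^sub>y\<close>. The symmetry \<open>\<psi>\<^sub>x\<^sub>y = \<psi>\<^sub>y\<^sub>x\<close> is Schwarz's theorem, proved from
  the mean value theorem applied to second differences over small squares.
\<close>

definition has_partials_at :: "(real \<Rightarrow> real \<Rightarrow> real) \<Rightarrow> real \<Rightarrow> real \<Rightarrow> real \<Rightarrow> real \<Rightarrow> bool" where
  "has_partials_at f f_x f_y x y \<longleftrightarrow>
     ((\<lambda>t. f t y) has_real_derivative f_x) (at x) \<and> ((\<lambda>t. f x t) has_real_derivative f_y) (at y)"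

lemma has_partials2_iff_has_partials_at:
  "has_partials2 f x y \<longleftrightarrow> has_partials_at f (pdx f x y) (pdy f x y) x y"
  by (simp add: has_partials2_def has_partials_at_def pdx_def pdy_def DERIV_deriv_iff_real_differentiable)

lemma has_partials_at_pdx_pdy:
  "has_partials_at f f_x f_y x y \<Longrightarrow> pdx f x y = f_x \<and> pdy f x y = f_y"
  by (simp add: has_partials_at_def pdx_def pdy_def DERIV_imp_deriv)

lemma has_partials_at_mult:
  assumes "has_partials_at f f_x f_y x y" and "has_partials_at g g_x g_y x y"
  shows "has_partials_at (\<lambda>x y. f x y * g x y) (f_x * g x y + f x y * g_x) (f_y * g x y + f x y * g_y) x y"
  using assms unfolding has_partials_at_def by (auto intro!: derivative_eq_intros)

lemma pdx_swap: "pdx (\<lambda>s t. f t s) = (\<lambda>s t. pdy f t s)"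
  by (simp add: pdx_def pdy_def fun_eq_iff)

lemma pdy_swap: "pdy (\<lambda>s t. f t s) = (\<lambda>s t. pdx f t s)"
  by (simp add: pdx_def pdy_def fun_eq_iff)

lemma has_partials2_swap: "has_partials2 (\<lambda>s t. f t s) x y \<longleftrightarrow> has_partials2 f y x"
  by (auto simp: has_partials2_def)

lemma second_difference_mvt:
  fixes f :: "real \<Rightarrow> real \<Rightarrow> real"
  assumes h: "0 < h"
    and partials: "\<And>s t. s \<in> {x0..x0+h} \<Longrightarrow> t \<in> {y0..y0+h} \<Longrightarrow>
                     has_partials2 f s t \<and> has_partials2 (pdx f) s t"
  obtains s t where "s \<in> {x0..x0+h}" "t \<in> {y0..y0+h}"
    "f (x0+h) (y0+h) - f (x0+h) y0 - f x0 (y0+h) + f x0 y0 = h\<^sup>2 * pdy (pdx f) s t"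
proof -
  have "\<exists>s. x0 < s \<and> s < x0 + h \<and>
      (f (x0+h) (y0+h) - f (x0+h) y0) - (f x0 (y0+h) - f x0 y0)
        = ((x0+h) - x0) * (pdx f s (y0+h) - pdx f s y0)"
  proof (rule MVT2)
    fix s assume "x0 \<le> s" "s \<le> x0 + h"
    then have "has_partials2 f s (y0+h)" "has_partials2 f s y0"
      using partials h by auto
    then show "((\<lambda>s. f s (y0+h) - f s y0) has_real_derivative pdx f s (y0+h) - pdx f s y0) (at s)"
      by (auto intro: DERIV_diff simp: has_partials2_iff_has_partials_at has_partials_at_def)
  qed (use h in auto)
  then obtain s where s: "x0 < s" "s < x0 + h"
    "f (x0+h) (y0+h) - f (x0+h) y0 - f x0 (y0+h) + f x0 y0 = h * (pdx f s (y0+h) - pdx f s y0)"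
    by (auto simp: algebra_simps)
  have "\<exists>t. y0 < t \<and> t < y0 + h \<and> pdx f s (y0+h) - pdx f s y0 = ((y0+h) - y0) * pdy (pdx f) s t"
  proof (rule MVT2)
    fix t assume "y0 \<le> t" "t \<le> y0 + h"
    then have "has_partials2 (pdx f) s t"
      using partials s by auto
    then show "(pdx f s has_real_derivative pdy (pdx f) s t) (at t)"
      by (simp add: has_partials2_iff_has_partials_at has_partials_at_def)
  qed (use h in auto)
  then obtain t where "y0 < t" "t < y0 + h" "pdx f s (y0+h) - pdx f s y0 = h * pdy (pdx f) s t"
    by auto
  with s show thesis
    by (intro that[of s t]) (auto simp: power2_eq_square)
qed

lemma mixed_partials_meet_in_square:
  fixes f :: "real \<Rightarrow> real \<Rightarrow> real"
  assumes h: "0 < h"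
    and partials: "\<And>s t. s \<in> {x0..x0+h} \<Longrightarrow> t \<in> {y0..y0+h} \<Longrightarrow>
                     has_partials2 f s t \<and> has_partials2 (pdx f) s t \<and> has_partials2 (pdy f) s t"
  obtains s t s' t' where "s \<in> {x0..x0+h}" "t \<in> {y0..y0+h}" "s' \<in> {x0..x0+h}" "t' \<in> {y0..y0+h}"
    "pdy (pdx f) s t = pdx (pdy f) s' t'"
proof -
  obtain s t where st: "s \<in> {x0..x0+h}" "t \<in> {y0..y0+h}"
    and A: "f (x0+h) (y0+h) - f (x0+h) y0 - f x0 (y0+h) + f x0 y0 = h\<^sup>2 * pdy (pdx f) s t"
    using second_difference_mvt[OF h, of x0 y0 f] partials by blast
  \<comment> \<open>The transposed function has the same second difference, and its \<open>pdy \<circ> pdx\<close> is \<open>pdx \<circ> pdy\<close> of \<open>f\<close>.\<close>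
  have partials_swapped: "has_partials2 (\<lambda>s t. f t s) t s \<and> has_partials2 (pdx (\<lambda>s t. f t s)) t s"
    if "s \<in> {x0..x0+h}" "t \<in> {y0..y0+h}" for s t
    unfolding pdx_swap[of f] has_partials2_swap[of f] has_partials2_swap[of "pdy f"]
    using partials[OF that] by auto
  obtain t' s' where st': "t' \<in> {y0..y0+h}" "s' \<in> {x0..x0+h}"
    and B: "f (x0+h) (y0+h) - f x0 (y0+h) - f (x0+h) y0 + f x0 y0 = h\<^sup>2 * pdx (pdy f) s' t'"
    using second_difference_mvt[OF h partials_swapped]
    unfolding pdx_swap[of f] pdy_swap[of "pdy f"] by blast
  have "h\<^sup>2 * pdy (pdx f) s t = h\<^sup>2 * pdx (pdy f) s' t'"
    using A B by linarith
  with h st st' show thesis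
    by (intro that[of s t s' t']) auto
qed

lemma pdy_pdx_eq_pdx_pdy:
  fixes f :: "real \<Rightarrow> real \<Rightarrow> real"
  assumes "open \<Omega>" and "(x0, y0) \<in> \<Omega>"
    and partials: "\<forall>(x,y)\<in>\<Omega>. has_partials2 f x y \<and> has_partials2 (pdx f) x y \<and> has_partials2 (pdy f) x y"
    and "continuous_on \<Omega> (\<lambda>(x,y). pdy (pdx f) x y)"
    and "continuous_on \<Omega> (\<lambda>(x,y). pdx (pdy f) x y)"
  shows "pdy (pdx f) x0 y0 = pdx (pdy f) x0 y0"
proof (rule eq_iff_diff_eq_0[THEN iffD2], rule dense_eq0_I)
  fix \<epsilon> :: real assume "0 < \<epsilon>"
  let ?A = "pdy (pdx f) x0 y0" and ?B = "pdx (pdy f) x0 y0"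
  have "isCont (\<lambda>(x,y). pdy (pdx f) x y) (x0, y0)" "isCont (\<lambda>(x,y). pdx (pdy f) x y) (x0, y0)"
    using assms continuous_on_eq_continuous_at by blast+
  then obtain \<delta>1 \<delta>2 where "\<delta>1 > 0" "\<delta>2 > 0"
    and near_A: "\<And>z. dist z (x0, y0) < \<delta>1 \<Longrightarrow> dist ((\<lambda>(x,y). pdy (pdx f) x y) z) ?A < \<epsilon> / 2"
    and near_B: "\<And>z. dist z (x0, y0) < \<delta>2 \<Longrightarrow> dist ((\<lambda>(x,y). pdx (pdy f) x y) z) ?B < \<epsilon> / 2"
    using \<open>0 < \<epsilon>\<close> unfolding continuous_at_eps_delta by (metis case_prod_conv half_gt_zero)
  obtain \<delta>0 where "\<delta>0 > 0" "ball (x0, y0) \<delta>0 \<subseteq> \<Omega>"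
    using assms(1,2) open_contains_ball by blast
  define h where "h = min \<delta>0 (min \<delta>1 \<delta>2) / 3"
  have "0 < h"
    using \<open>\<delta>0 > 0\<close> \<open>\<delta>1 > 0\<close> \<open>\<delta>2 > 0\<close> by (simp add: h_def)
  have dist_in_square: "dist (s, t) (x0, y0) < min \<delta>0 (min \<delta>1 \<delta>2)"
    if "s \<in> {x0..x0+h}" "t \<in> {y0..y0+h}" for s t
  proof -
    have "dist (s, t) (x0, y0) \<le> \<bar>s - x0\<bar> + \<bar>t - y0\<bar>"
      using sqrt_sum_squares_le_sum_abs[of "s - x0" "t - y0"]
      by (simp add: dist_Pair_Pair dist_real_def)
    also have "\<dots> \<le> 2 * h"
      using that by auto
    finally show ?thesis
      using \<open>0 < h\<close> unfolding h_def by linarith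
  qed
  have "(s, t) \<in> \<Omega>" if "s \<in> {x0..x0+h}" "t \<in> {y0..y0+h}" for s t
    using dist_in_square[OF that] \<open>ball (x0, y0) \<delta>0 \<subseteq> \<Omega>\<close> by (auto simp: dist_commute)
  then obtain s t s' t' where st: "s \<in> {x0..x0+h}" "t \<in> {y0..y0+h}" "s' \<in> {x0..x0+h}" "t' \<in> {y0..y0+h}"
    and meet: "pdy (pdx f) s t = pdx (pdy f) s' t'"
    using mixed_partials_meet_in_square[OF \<open>0 < h\<close>, of x0 y0 f] partials by blast
  have "\<bar>pdy (pdx f) s t - ?A\<bar> < \<epsilon> / 2" "\<bar>pdx (pdy f) s' t' - ?B\<bar> < \<epsilon> / 2"
    using near_A[of "(s, t)"] near_B[of "(s', t')"] dist_in_square[OF st(1,2)] dist_in_square[OF st(3,4)]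
    by (auto simp: dist_real_def)
  with meet show "\<bar>?A - ?B\<bar> \<le> \<epsilon>"
    by linarith
qed

lemma DERIV_linear_ratio:
  fixes \<phi>1 \<gamma>1 \<phi>2 \<gamma>2 :: "real \<Rightarrow> real"
  assumes "(\<phi>1 has_real_derivative \<phi>1') (at t)" "(\<gamma>1 has_real_derivative \<gamma>1') (at t)"
    and "(\<phi>2 has_real_derivative \<phi>2') (at t)" "(\<gamma>2 has_real_derivative \<gamma>2') (at t)"
    and "\<phi>2 t * p1 + \<gamma>2 t * p2 \<noteq> 0"
  shows "((\<lambda>s. (\<phi>1 s * p1 + \<gamma>1 s * p2) / (\<phi>2 s * p1 + \<gamma>2 s * p2)) has_real_derivative
           ((\<phi>1' * p1 + \<gamma>1' * p2) * (\<phi>2 t * p1 + \<gamma>2 t * p2)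
            - (\<phi>1 t * p1 + \<gamma>1 t * p2) * (\<phi>2' * p1 + \<gamma>2' * p2)) / (\<phi>2 t * p1 + \<gamma>2 t * p2)\<^sup>2) (at t)"
  using assms by (auto intro!: derivative_eq_intros simp: power2_eq_square)

lemma poisson_linear_ratio_geod_H:
  fixes f1 g1 f2 g2 Lam :: "real \<Rightarrow> real \<Rightarrow> real"
  assumes "has_partials_at f1 f1_x f1_y x y" "has_partials_at g1 g1_x g1_y x y"
    and "has_partials_at f2 f2_x f2_y x y" "has_partials_at g2 g2_x g2_y x y"
    and "has_partials_at Lam Lam_x Lam_y x y"
    and L: "Lam x y \<noteq> 0" and D: "f2 x y * p1 + g2 x y * p2 \<noteq> 0"
  defines "F \<equiv> \<lambda>x y p1 p2. (f1 x y * p1 + g1 x y * p2) / (f2 x y * p1 + g2 x y * p2)"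
  shows "has_partials4 F x y p1 p2" and "has_partials4 (geod_H Lam) x y p1 p2"
    and "poisson F (geod_H Lam) x y p1 p2 =
      (2 * Lam x y *
         (p1 * ((f1_x * p1 + g1_x * p2) * (f2 x y * p1 + g2 x y * p2)
                - (f1 x y * p1 + g1 x y * p2) * (f2_x * p1 + g2_x * p2))
        + p2 * ((f1_y * p1 + g1_y * p2) * (f2 x y * p1 + g2 x y * p2)
                - (f1 x y * p1 + g1 x y * p2) * (f2_y * p1 + g2_y * p2)))
       + (p1\<^sup>2 + p2\<^sup>2) * (f1 x y * g2 x y - g1 x y * f2 x y) * (p2 * Lam_x - p1 * Lam_y))
      / (2 * (Lam x y)\<^sup>2 * (f2 x y * p1 + g2 x y * p2)\<^sup>2)" (is "_ = ?bracket")
proof -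
  have F_x: "((\<lambda>t. F t y p1 p2) has_real_derivative
      ((f1_x * p1 + g1_x * p2) * (f2 x y * p1 + g2 x y * p2)
       - (f1 x y * p1 + g1 x y * p2) * (f2_x * p1 + g2_x * p2)) / (f2 x y * p1 + g2 x y * p2)\<^sup>2) (at x)"
    unfolding F_def using assms(1-4) D by (intro DERIV_linear_ratio) (auto simp: has_partials_at_def)
  have F_y: "((\<lambda>t. F x t p1 p2) has_real_derivative
      ((f1_y * p1 + g1_y * p2) * (f2 x y * p1 + g2 x y * p2)
       - (f1 x y * p1 + g1 x y * p2) * (f2_y * p1 + g2_y * p2)) / (f2 x y * p1 + g2 x y * p2)\<^sup>2) (at y)"
    unfolding F_def using assms(1-4) D by (intro DERIV_linear_ratio) (auto simp: has_partials_at_def)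
  have F_p1: "((\<lambda>t. F x y t p2) has_real_derivative
      (f1 x y * g2 x y - g1 x y * f2 x y) * p2 / (f2 x y * p1 + g2 x y * p2)\<^sup>2) (at p1)"
    unfolding F_def using D
    by (auto intro!: derivative_eq_intros simp: power2_eq_square algebra_simps)
  have F_p2: "((\<lambda>t. F x y p1 t) has_real_derivative
      - (f1 x y * g2 x y - g1 x y * f2 x y) * p1 / (f2 x y * p1 + g2 x y * p2)\<^sup>2) (at p2)"
    unfolding F_def using D
    by (auto intro!: derivative_eq_intros simp: power2_eq_square algebra_simps)
  have H_x: "((\<lambda>t. geod_H Lam t y p1 p2) has_real_derivative - (p1\<^sup>2 + p2\<^sup>2) * Lam_x / (2 * (Lam x y)\<^sup>2)) (at x)"
    unfolding geod_H_def using assms(5) L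
    by (auto intro!: derivative_eq_intros simp: has_partials_at_def power2_eq_square field_simps)
  have H_y: "((\<lambda>t. geod_H Lam x t p1 p2) has_real_derivative - (p1\<^sup>2 + p2\<^sup>2) * Lam_y / (2 * (Lam x y)\<^sup>2)) (at y)"
    unfolding geod_H_def using assms(5) L
    by (auto intro!: derivative_eq_intros simp: has_partials_at_def power2_eq_square field_simps)
  have H_p1: "((\<lambda>t. geod_H Lam x y t p2) has_real_derivative p1 / Lam x y) (at p1)"
    unfolding geod_H_def using L by (auto intro!: derivative_eq_intros simp: field_simps)
  have H_p2: "((\<lambda>t. geod_H Lam x y p1 t) has_real_derivative p2 / Lam x y) (at p2)"
    unfolding geod_H_def using L by (auto intro!: derivative_eq_intros simp: field_simps)
  show "has_partials4 F x y p1 p2" "has_partials4 (geod_H Lam) x y p1 p2"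
    unfolding has_partials4_def real_differentiable_def
    using F_x F_y F_p1 F_p2 H_x H_y H_p1 H_p2 by blast+
  show "poisson F (geod_H Lam) x y p1 p2 = ?bracket"
    unfolding poisson_def d_x_def d_y_def d_p1_def d_p2_def
      DERIV_imp_deriv[OF F_x] DERIV_imp_deriv[OF F_y] DERIV_imp_deriv[OF F_p1] DERIV_imp_deriv[OF F_p2]
      DERIV_imp_deriv[OF H_x] DERIV_imp_deriv[OF H_y] DERIV_imp_deriv[OF H_p1] DERIV_imp_deriv[OF H_p2]
    using L D by (simp add: divide_simps) algebra
qed

lemma conjugate_ratio_bracket_numerator:
  fixes a b u v a_x a_y b_x b_y u_x u_y v_x v_y p1 p2 :: real
  assumes "u_x = v_y" and "u_y = - v_x" and "a_y = b_x"
  shows "2 * (a\<^sup>2 + b\<^sup>2) *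
         (p1 * (((- b_x * u - b * u_x - (a_x * v + a * v_x)) * p1 + (a_x * u + a * u_x - (b_x * v + b * v_x)) * p2)
                 * (- b * p1 + a * p2)
                - ((- b * u - a * v) * p1 + (a * u - b * v) * p2) * (- b_x * p1 + a_x * p2))
        + p2 * (((- b_y * u - b * u_y - (a_y * v + a * v_y)) * p1 + (a_y * u + a * u_y - (b_y * v + b * v_y)) * p2)
                 * (- b * p1 + a * p2)
                - ((- b * u - a * v) * p1 + (a * u - b * v) * p2) * (- b_y * p1 + a_y * p2)))
       + (p1\<^sup>2 + p2\<^sup>2) * ((- b * u - a * v) * a - (a * u - b * v) * - b)
           * (p2 * (2 * (a * a_x + b * b_x)) - p1 * (2 * (a * a_y + b * b_y)))
       = - 2 * (a\<^sup>2 + b\<^sup>2) * (p1\<^sup>2 + p2\<^sup>2) * (- b * p1 + a * p2) * (a * v_x + b * v_y + v * (a_x + b_y))"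
  unfolding assms by algebra

lemma poisson_conjugate_ratio_geod_H:
  fixes a b u v :: "real \<Rightarrow> real \<Rightarrow> real"
  assumes a: "has_partials_at a a_x a_y x y" and b: "has_partials_at b b_x b_y x y"
    and u: "has_partials_at u u_x u_y x y" and v: "has_partials_at v v_x v_y x y"
    and cauchy_riemann: "u_x = v_y" "u_y = - v_x" and closed: "a_y = b_x"
    and pde: "a x y * v_x + b x y * v_y + v x y * (a_x + b_y) = 0"
    and L: "(a x y)\<^sup>2 + (b x y)\<^sup>2 \<noteq> 0" and D: "- b x y * p1 + a x y * p2 \<noteq> 0"
  defines "F \<equiv> \<lambda>x y p1 p2. ((- b x y * u x y - a x y * v x y) * p1 + (a x y * u x y - b x y * v x y) * p2)
                           / (- b x y * p1 + a x y * p2)"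
    and "H \<equiv> geod_H (\<lambda>x y. (a x y)\<^sup>2 + (b x y)\<^sup>2)"
  shows "has_partials4 F x y p1 p2 \<and> has_partials4 H x y p1 p2 \<and> poisson F H x y p1 p2 = 0"
proof -
  have f1: "has_partials_at (\<lambda>x y. - b x y * u x y - a x y * v x y)
      (- b_x * u x y - b x y * u_x - (a_x * v x y + a x y * v_x))
      (- b_y * u x y - b x y * u_y - (a_y * v x y + a x y * v_y)) x y"
    using a b u v unfolding has_partials_at_def by (auto intro!: derivative_eq_intros)
  have g1: "has_partials_at (\<lambda>x y. a x y * u x y - b x y * v x y)
      (a_x * u x y + a x y * u_x - (b_x * v x y + b x y * v_x))
      (a_y * u x y + a x y * u_y - (b_y * v x y + b x y * v_y)) x y"
    using a b u v unfolding has_partials_at_def by (auto intro!: derivative_eq_intros)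
  have f2: "has_partials_at (\<lambda>x y. - b x y) (- b_x) (- b_y) x y"
    using b unfolding has_partials_at_def by (auto intro!: derivative_eq_intros)
  have Lam: "has_partials_at (\<lambda>x y. (a x y)\<^sup>2 + (b x y)\<^sup>2)
      (2 * (a x y * a_x + b x y * b_x)) (2 * (a x y * a_y + b x y * b_y)) x y"
    using a b unfolding has_partials_at_def by (auto intro!: derivative_eq_intros simp: algebra_simps)
  note bracket = poisson_linear_ratio_geod_H[OF f1 g1 f2 a Lam L D]
  show ?thesis
    using bracket unfolding F_def H_def conjugate_ratio_bracket_numerator[OF cauchy_riemann closed] pde
    by simp
qed

theorem theorem1:
  fixes u v psi :: "real \<Rightarrow> real \<Rightarrow> real" and \<Omega> :: "(real \<times> real) set"
  assumes "open \<Omega>"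
    and "C1_on \<Omega> u" and "C1_on \<Omega> v"
    and "\<forall>(x,y)\<in>\<Omega>. pdx u x y = pdy v x y \<and> pdy u x y = - pdx v x y"
    and "C2_on \<Omega> psi"
    and "\<forall>(x,y)\<in>\<Omega>. pdx (\<lambda>x y. v x y * pdx psi x y) x y + pdy (\<lambda>x y. v x y * pdy psi x y) x y = 0"
  shows "let f2 = (\<lambda>x y. - pdy psi x y); g2 = (\<lambda>x y. pdx psi x y);
             f1 = (\<lambda>x y. - pdy psi x y * u x y - pdx psi x y * v x y);
             g1 = (\<lambda>x y. pdx psi x y * u x y - pdy psi x y * v x y);
             Lam = (\<lambda>x y. (pdx psi x y)^2 + (pdy psi x y)^2);
             F = (\<lambda>x y p1 p2. (f1 x y * p1 + g1 x y * p2) / (f2 x y * p1 + g2 x y * p2));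
             H = geod_H Lam
         in \<forall>x y p1 p2. (x, y) \<in> \<Omega> \<and> Lam x y \<noteq> 0 \<and> f2 x y * p1 + g2 x y * p2 \<noteq> 0 \<longrightarrow>
              has_partials4 F x y p1 p2 \<and> has_partials4 H x y p1 p2 \<and>
              poisson F H x y p1 p2 = 0"
proof -
  have psi: "\<forall>(x,y)\<in>\<Omega>. has_partials2 psi x y \<and> has_partials2 (pdx psi) x y \<and> has_partials2 (pdy psi) x y"
    using assms(5) unfolding C2_on_def by blast
  {
    fix x y
    assume xy: "(x, y) \<in> \<Omega>"
    have a: "has_partials_at (pdx psi) (pdx (pdx psi) x y) (pdy (pdx psi) x y) x y"
      and b: "has_partials_at (pdy psi) (pdx (pdy psi) x y) (pdy (pdy psi) x y) x y"
      using psi xy by (auto simp: has_partials2_iff_has_partials_at)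
    have u: "has_partials_at u (pdx u x y) (pdy u x y) x y"
      and v: "has_partials_at v (pdx v x y) (pdy v x y) x y"
      using assms(2,3) xy by (auto simp: C1_on_def has_partials2_iff_has_partials_at)
    have cauchy_riemann: "pdx u x y = pdy v x y" "pdy u x y = - pdx v x y"
      using assms(4) xy by auto
    have closed: "pdy (pdx psi) x y = pdx (pdy psi) x y"
      using pdy_pdx_eq_pdx_pdy[OF assms(1) xy psi] assms(5) unfolding C2_on_def by blast
    have "pdx psi x y * pdx v x y + pdy psi x y * pdy v x y
          + v x y * (pdx (pdx psi) x y + pdy (pdy psi) x y) = 0"
      using assms(6) xy has_partials_at_pdx_pdy[OF has_partials_at_mult[OF v a]]
        has_partials_at_pdx_pdy[OF has_partials_at_mult[OF v b]]
      by (auto simp: algebra_simps)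
    note poisson_conjugate_ratio_geod_H[OF a b u v cauchy_riemann closed this]
  }
  then show ?thesis
    unfolding Let_def by blast
qed

end
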